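(* Let $G\ne1$ be a finitely generated group in $\mathrm{Q}(\mathrm{PLO})$. Then there exists a normal subgroup $H\ne 1$ of $G$ such that whenever $A,B$ are finitely generated subgroups of $H$, there exists $g\in G$ such that $A^g$ and $B$ centralize each other.
   Context: $\mathrm{PLO}$ is the class of groups isomorphic to a subgroup of $\mathcal{P}$, the group of piecewise linear orientation preserving self-homeomorphisms of $[0,1]$. $\mathrm{Q}(\mathrm{PLO})$ is the class of groups isomorphic to a quotient of a $\mathrm{PLO}$-group. $A^g=gAg^{-1}$. *)

theory Defs
  imports "HOL-Analysis.Analysis" "HOL-Algebra.Algebra"
begin

text \<open>Piecewise linear orientation preserving self-homeomorphisms of [0,1],
  extended by the identity outside [0,1] so that functions are determined by
  their restriction to [0,1].\<close>

definition pl_on_unit :: "(real \<Rightarrow> real) \<Rightarrow> bool" where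
  "pl_on_unit f \<longleftrightarrow>
     (\<exists>S. finite S \<and> {0,1} \<subseteq> S \<and> S \<subseteq> {0..1} \<and>
        (\<forall>x\<in>S. \<forall>y\<in>S. x < y \<and> {x<..<y} \<inter> S = {} \<longrightarrow>
           (\<exists>a b. \<forall>t\<in>{x..y}. f t = a * t + b)))"

definition PLO_homeos :: "(real \<Rightarrow> real) set" where
  "PLO_homeos = {f. (\<exists>g. homeomorphism {0..1} {0..1} f g) \<and> mono_on {0..1} f
                   \<and> pl_on_unit f \<and> (\<forall>x. x \<notin> {0..1} \<longrightarrow> f x = x)}"

definition PLgroup :: "(real \<Rightarrow> real) monoid" where
  "PLgroup = \<lparr>carrier = PLO_homeos, mult = (\<lambda>f g. f \<circ> g), one = id\<rparr>"

definition in_QPLO :: "('a, 'b) monoid_scheme \<Rightarrow> bool" where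
  "in_QPLO G \<longleftrightarrow> (\<exists>K N. subgroup K PLgroup \<and> N \<lhd> (PLgroup\<lparr>carrier := K\<rparr>)
                      \<and> G \<cong> ((PLgroup\<lparr>carrier := K\<rparr>) Mod N))"

definition fin_gen :: "('a, 'b) monoid_scheme \<Rightarrow> 'a set \<Rightarrow> bool" where
  "fin_gen G A \<longleftrightarrow> (\<exists>S. finite S \<and> S \<subseteq> carrier G \<and> A = generate G S)"

end

(*
  Write G = K / N with K a group of PL homeomorphisms. Two PL homeomorphisms fixing p are
  linear on each side of p near p, so they commute near p; hence every commutator of K is the
  identity near every common fixed point of K. If all commutators lie in N, G is abelian and
  H = G works. Otherwise some commutator lies outside N, and by compactness its support is
  covered by the orbitals of finitely many points. Choose a finite set X of minimal size such
  that the normal subgroup L_X of elements which are the identity near the common fixed points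
  and supported in the orbitals of X is not contained in N. Given finitely generated subgroups
  A, B of L_X and x in X, the elements of A fix a top segment and those of B a bottom segment
  of the orbital of x, so some g in K moves the support of A^g in that orbital above the
  support of B; then [A^g, B] lies in L_(X - {x}), which is contained in N by minimality.
  The image of L_X in G is the required H.
*)

theory Submission
  imports Defs
begin

section \<open>Piecewise linear homeomorphisms of the unit interval\<close>

lemma PLO_homeos_image_unit:
  assumes "f \<in> PLO_homeos"
  shows "f ` {0..1} = {0..1}"
  using assms unfolding PLO_homeos_def homeomorphism_def by blast

lemma PLO_homeos_fix_outside:
  assumes f: "f \<in> PLO_homeos" and x: "x \<le> 0 \<or> 1 \<le> x"
  shows "f x = x"
proof -
  have mono: "mono_on {0..1} f"
    using f unfolding PLO_homeos_def by blast
  have "0 \<in> f ` {0..1}" "1 \<in> f ` {0..1}"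
    using PLO_homeos_image_unit[OF f] by auto
  then obtain s t where "s \<in> {0..1}" "f s = 0" "t \<in> {0..1}" "f t = 1"
    by (metis imageE)
  then have "f 0 \<le> 0" "1 \<le> f 1"
    using mono_onD[OF mono, of 0 s] mono_onD[OF mono, of t 1] by auto
  moreover have "f 0 \<in> {0..1}" "f 1 \<in> {0..1}"
    using PLO_homeos_image_unit[OF f] by auto
  moreover have "f x = x" if "x \<notin> {0..1}"
    using f that unfolding PLO_homeos_def by blast
  ultimately show ?thesis
    using x by (cases "x \<in> {0..1}") auto
qed

lemma strict_mono_PLO_homeos:
  assumes f: "f \<in> PLO_homeos"
  shows "strict_mono f"
proof -
  obtain g where hom: "homeomorphism {0..1} {0..1} f g" and mono: "mono_on {0..1} f"
    using f unfolding PLO_homeos_def by blast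
  have inj: "inj_on f {0..1}"
    using hom unfolding homeomorphism_def by (metis inj_on_inverseI)
  have "f x < f y" if "x < y" "x \<in> {0..1}" "y \<in> {0..1}" for x y
    using mono_onD[OF mono, of x y] inj_onD[OF inj, of x y] that by fastforce
  moreover have "f x \<in> {0..1} \<longleftrightarrow> x \<in> {0..1}" for x
    using PLO_homeos_image_unit[OF f] PLO_homeos_fix_outside[OF f, of x] by force
  ultimately show ?thesis
    unfolding strict_mono_def
    by (smt (verit) PLO_homeos_fix_outside[OF f] atLeastAtMost_iff)
qed

lemma isCont_PLO_homeos:
  assumes f: "f \<in> PLO_homeos"
  shows "isCont f x"
proof -
  have "continuous_on {0..1} f"
    using f unfolding PLO_homeos_def homeomorphism_def by blast
  moreover have "continuous_on {..0} f" "continuous_on {1..} f"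
    using PLO_homeos_fix_outside[OF f]
    by (auto intro!: continuous_on_eq[OF continuous_on_id])
  ultimately have "continuous_on ({..0} \<union> {0..1} \<union> {1..}) f"
    by (intro continuous_on_closed_Un) auto
  moreover have "{..0} \<union> {0..1} \<union> {1..} = (UNIV :: real set)"
    by auto
  ultimately show ?thesis
    by (simp add: continuous_on_eq_continuous_at)
qed

lemma PLO_homeos_affine_on_gaps:
  assumes f: "f \<in> PLO_homeos"
  obtains S where "finite S"
    "\<And>u v. u < v \<Longrightarrow> {u<..<v} \<inter> S = {} \<Longrightarrow> \<exists>a b. \<forall>t\<in>{u..v}. f t = a * t + b"
proof -
  have "pl_on_unit f"
    using f unfolding PLO_homeos_def by blast
  then obtain S where S: "finite S" "{0, 1} \<subseteq> S" "S \<subseteq> {0..1}"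
    and affine: "\<forall>x\<in>S. \<forall>y\<in>S. x < y \<and> {x<..<y} \<inter> S = {} \<longrightarrow>
                   (\<exists>a b. \<forall>t\<in>{x..y}. f t = a * t + b)"
    unfolding pl_on_unit_def by blast
  have "\<exists>a b. \<forall>t\<in>{u..v}. f t = a * t + b" if uv: "u < v" "{u<..<v} \<inter> S = {}" for u v
  proof (cases "v \<le> 0 \<or> 1 \<le> u")
    case True
    then have "\<forall>t\<in>{u..v}. f t = 1 * t + 0"
      using PLO_homeos_fix_outside[OF f] by force
    then show ?thesis by blast
  next
    case False
    have "0 \<notin> {u<..<v}" "1 \<notin> {u<..<v}"
      using uv(2) S(2) by auto
    with False have inside: "0 \<le> u" "v \<le> 1"
      by auto
    \<comment> \<open>enlarge the gap to one between consecutive points of \<open>S\<close>\<close>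
    define r where "r = Max {s\<in>S. s \<le> u}"
    define q where "q = Min {s\<in>S. v \<le> s}"
    have below: "finite {s\<in>S. s \<le> u}" "0 \<in> {s\<in>S. s \<le> u}"
      and above: "finite {s\<in>S. v \<le> s}" "1 \<in> {s\<in>S. v \<le> s}"
      using S inside by auto
    have r: "r \<in> S" "r \<le> u" "\<And>s. s \<in> S \<Longrightarrow> s \<le> u \<Longrightarrow> s \<le> r"
      using Max_in[OF below(1)] Max_ge[OF below(1)] below(2) unfolding r_def by auto
    have q: "q \<in> S" "v \<le> q" "\<And>s. s \<in> S \<Longrightarrow> v \<le> s \<Longrightarrow> q \<le> s"
      using Min_in[OF above(1)] Min_le[OF above(1)] above(2) unfolding q_def by auto
    have "{r<..<q} \<inter> S = {}"
      using r(3) q(3) uv(2) by (force simp: not_le)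
    then obtain a b where "\<forall>t\<in>{r..q}. f t = a * t + b"
      using affine r q uv(1) by (meson order.strict_trans1 order.strict_trans2)
    then show ?thesis
      using r(2) q(2) by auto
  qed
  with S(1) that show ?thesis by blast
qed

lemma PLO_homeos_linear_germs:
  assumes f: "f \<in> PLO_homeos"
  shows "\<exists>a. \<forall>\<^sub>F t in at_right p. f t = f p + a * (t - p)"
    and "\<exists>a. \<forall>\<^sub>F t in at_left p. f t = f p + a * (t - p)"
proof -
  obtain S where S: "finite S"
    and affine: "\<And>u v. u < v \<Longrightarrow> {u<..<v} \<inter> S = {} \<Longrightarrow> \<exists>a b. \<forall>t\<in>{u..v}. f t = a * t + b"
    using PLO_homeos_affine_on_gaps[OF f] by blast
  obtain e :: real where e: "e > 0" "\<And>s. s \<in> S \<Longrightarrow> s \<noteq> p \<Longrightarrow> e \<le> dist p s"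
    using finite_set_avoid[OF S, of p] by blast
  have linear: "\<exists>a. \<forall>t\<in>{u..v}. f t = f p + a * (t - p)"
    if uv: "u < v" "{u<..<v} \<inter> S = {}" and p: "p \<in> {u..v}" for u v
  proof -
    obtain a b where "\<forall>t\<in>{u..v}. f t = a * t + b"
      using affine[OF uv] by blast
    then have "\<forall>t\<in>{u..v}. f t = f p + a * (t - p)"
      using p by (simp add: algebra_simps)
    then show ?thesis by blast
  qed
  have "s \<notin> S" if "0 < \<bar>s - p\<bar>" "\<bar>s - p\<bar> < e" for s
    using e(2)[of s] that by (auto simp: dist_real_def abs_minus_commute)
  then have gaps: "{p<..<p + e} \<inter> S = {}" "{p - e<..<p} \<inter> S = {}"
    by (auto simp: abs_if)
  obtain a where a: "\<forall>t\<in>{p..p + e}. f t = f p + a * (t - p)"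
    using linear[OF _ gaps(1)] e(1) by auto
  have "\<forall>\<^sub>F t in at_right p. t \<in> {p<..<p + e}"
    by (rule eventually_at_right_real) (use e(1) in simp)
  then have "\<forall>\<^sub>F t in at_right p. f t = f p + a * (t - p)"
    by eventually_elim (rule a[rule_format], simp)
  then show "\<exists>a. \<forall>\<^sub>F t in at_right p. f t = f p + a * (t - p)" ..
  obtain a where a: "\<forall>t\<in>{p - e..p}. f t = f p + a * (t - p)"
    using linear[OF _ gaps(2)] e(1) by auto
  have "\<forall>\<^sub>F t in at_left p. t \<in> {p - e<..<p}"
    by (rule eventually_at_left_real) (use e(1) in simp)
  then have "\<forall>\<^sub>F t in at_left p. f t = f p + a * (t - p)"
    by eventually_elim (rule a[rule_format], simp)
  then show "\<exists>a. \<forall>\<^sub>F t in at_left p. f t = f p + a * (t - p)" ..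
qed

lemma filterlim_at_right_strict_mono:
  fixes f :: "real \<Rightarrow> real"
  assumes "strict_mono f" "isCont f p"
  shows "filterlim f (at_right (f p)) (at_right p)"
  unfolding filterlim_at
proof
  show "\<forall>\<^sub>F t in at_right p. f t \<in> {f p<..} \<and> f t \<noteq> f p"
    using eventually_at_right_less[of p] by (auto elim!: eventually_mono dest: strict_monoD[OF assms(1)])
  show "(f \<longlongrightarrow> f p) (at_right p)"
    using assms(2) by (simp add: isCont_def filterlim_at_split)
qed

lemma filterlim_at_left_strict_mono:
  fixes f :: "real \<Rightarrow> real"
  assumes "strict_mono f" "isCont f p"
  shows "filterlim f (at_left (f p)) (at_left p)"
  unfolding filterlim_at
proof
  show "\<forall>\<^sub>F t in at_left p. f t \<in> {..<f p} \<and> f t \<noteq> f p"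
    using eventually_at_left_real[of "p - 1" p] by (auto elim!: eventually_mono dest: strict_monoD[OF assms(1)])
  show "(f \<longlongrightarrow> f p) (at_left p)"
    using assms(2) by (simp add: isCont_def filterlim_at_split)
qed

lemma eventually_commute_of_linear_germs:
  fixes f h :: "real \<Rightarrow> real"
  assumes "filterlim f F F" "filterlim h F F"
    and "\<forall>\<^sub>F t in F. f t = p + a * (t - p)" "\<forall>\<^sub>F t in F. h t = p + b * (t - p)"
  shows "\<forall>\<^sub>F t in F. f (h t) = h (f t)"
proof -
  have "\<forall>\<^sub>F t in F. f (h t) = p + a * (h t - p)" "\<forall>\<^sub>F t in F. h (f t) = p + b * (f t - p)"
    using filterlim_iff[THEN iffD1, rule_format, OF assms(2) assms(3)]
      filterlim_iff[THEN iffD1, rule_format, OF assms(1) assms(4)] by simp_all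
  with assms(3,4) show ?thesis
  proof eventually_elim
    case (elim t)
    then have "f (h t) = p + a * b * (t - p)" "h (f t) = p + b * a * (t - p)"
      by (simp_all add: mult.assoc)
    then show ?case
      by simp
  qed
qed

lemma PLO_homeos_commute_near_common_fixed_point:
  assumes f: "f \<in> PLO_homeos" and h: "h \<in> PLO_homeos" and fp: "f p = p" and hp: "h p = p"
  shows "\<forall>\<^sub>F t in nhds p. f (h t) = h (f t)"
proof -
  obtain a b where "\<forall>\<^sub>F t in at_right p. f t = p + a * (t - p)" "\<forall>\<^sub>F t in at_right p. h t = p + b * (t - p)"
    using PLO_homeos_linear_germs(1)[OF f, of p] PLO_homeos_linear_germs(1)[OF h, of p]
    unfolding fp hp by blast
  moreover have "filterlim f (at_right p) (at_right p)" "filterlim h (at_right p) (at_right p)"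
    using filterlim_at_right_strict_mono[OF strict_mono_PLO_homeos[OF f] isCont_PLO_homeos[OF f], of p]
      filterlim_at_right_strict_mono[OF strict_mono_PLO_homeos[OF h] isCont_PLO_homeos[OF h], of p]
    unfolding fp hp .
  ultimately have right: "\<forall>\<^sub>F t in at_right p. f (h t) = h (f t)"
    by (intro eventually_commute_of_linear_germs)
  obtain a b where "\<forall>\<^sub>F t in at_left p. f t = p + a * (t - p)" "\<forall>\<^sub>F t in at_left p. h t = p + b * (t - p)"
    using PLO_homeos_linear_germs(2)[OF f, of p] PLO_homeos_linear_germs(2)[OF h, of p]
    unfolding fp hp by blast
  moreover have "filterlim f (at_left p) (at_left p)" "filterlim h (at_left p) (at_left p)"
    using filterlim_at_left_strict_mono[OF strict_mono_PLO_homeos[OF f] isCont_PLO_homeos[OF f], of p]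
      filterlim_at_left_strict_mono[OF strict_mono_PLO_homeos[OF h] isCont_PLO_homeos[OF h], of p]
    unfolding fp hp .
  ultimately have "\<forall>\<^sub>F t in at_left p. f (h t) = h (f t)"
    by (intro eventually_commute_of_linear_germs)
  with right fp hp show ?thesis
    by (simp add: eventually_nhds_conv_at eventually_at_split)
qed

section \<open>Conjugating subgroups to commute modulo a normal subgroup\<close>

definition commutator :: "('a, 'b) monoid_scheme \<Rightarrow> 'a \<Rightarrow> 'a \<Rightarrow> 'a" where
  "commutator G x y = x \<otimes>\<^bsub>G\<^esub> y \<otimes>\<^bsub>G\<^esub> inv\<^bsub>G\<^esub> x \<otimes>\<^bsub>G\<^esub> inv\<^bsub>G\<^esub> y"

definition conj_commuting_mod :: "('a, 'b) monoid_scheme \<Rightarrow> 'a set \<Rightarrow> 'a set \<Rightarrow> bool" where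
  "conj_commuting_mod G N L \<longleftrightarrow>
     (\<forall>A B. finite A \<longrightarrow> A \<subseteq> L \<longrightarrow> finite B \<longrightarrow> B \<subseteq> L \<longrightarrow>
       (\<exists>g\<in>carrier G. \<forall>a\<in>generate G A. \<forall>b\<in>generate G B.
          commutator G (g \<otimes>\<^bsub>G\<^esub> a \<otimes>\<^bsub>G\<^esub> inv\<^bsub>G\<^esub> g) b \<in> N))"

lemma conj_commuting_mod_mono:
  assumes "conj_commuting_mod G N L" "N \<subseteq> N'"
  shows "conj_commuting_mod G N' L"
  unfolding conj_commuting_mod_def
proof (intro allI impI)
  fix A B assume "finite A" "A \<subseteq> L" "finite B" "B \<subseteq> L"
  with assms(1) obtain g where "g \<in> carrier G"
      "\<forall>a\<in>generate G A. \<forall>b\<in>generate G B. commutator G (g \<otimes>\<^bsub>G\<^esub> a \<otimes>\<^bsub>G\<^esub> inv\<^bsub>G\<^esub> g) b \<in> N"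
    unfolding conj_commuting_mod_def by meson
  with assms(2) show "\<exists>g\<in>carrier G. \<forall>a\<in>generate G A. \<forall>b\<in>generate G B.
      commutator G (g \<otimes>\<^bsub>G\<^esub> a \<otimes>\<^bsub>G\<^esub> inv\<^bsub>G\<^esub> g) b \<in> N'"
    by blast
qed

lemma (in group) conj_commuting_mod_carrier:
  assumes "derived_set G (carrier G) \<subseteq> N"
  shows "conj_commuting_mod G N (carrier G)"
  unfolding conj_commuting_mod_def
proof (intro allI impI bexI[OF _ one_closed] ballI)
  fix A B a b
  assume "A \<subseteq> carrier G" "B \<subseteq> carrier G" "a \<in> generate G A" "b \<in> generate G B"
  then have a: "a \<in> carrier G" and b: "b \<in> carrier G"
    using generate_in_carrier by blast+
  then have "commutator G a b \<in> derived_set G (carrier G)"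
    unfolding commutator_def by blast
  with assms a show "commutator G (\<one> \<otimes> a \<otimes> inv \<one>) b \<in> N"
    by auto
qed

lemma surj_hom_of_iso_FactGroup:
  assumes G: "group G" and N: "N \<lhd> K" and \<phi>: "\<phi> \<in> iso G (K Mod N)"
  obtains \<theta> where "group_hom K G \<theta>" "\<theta> ` carrier K = carrier G" "kernel K G \<theta> = N"
proof -
  interpret N: normal N K by (rule N)
  interpret Q: group "K Mod N" by (rule N.factorgroup_is_group)
  define \<psi> where "\<psi> = inv_into (carrier G) \<phi>"
  have \<psi>: "\<psi> \<in> iso (K Mod N) G"
    unfolding \<psi>_def using group.iso_set_sym[OF G \<phi>] .
  have \<psi>_hom: "group_hom (K Mod N) G \<psi>"
    using \<psi> G by (simp add: group_hom_def group_hom_axioms_def iso_def Q.group_axioms)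
  define \<theta> where "\<theta> = (\<lambda>k. \<psi> (N #>\<^bsub>K\<^esub> k))"
  have "\<theta> \<in> hom K G"
    using hom_compose[OF N.r_coset_hom_Mod iso_imp_homomorphism[OF \<psi>]]
    unfolding \<theta>_def compose_def by (simp add: hom_def comp_def)
  then have hom: "group_hom K G \<theta>"
    using G by (simp add: group_hom_def group_hom_axioms_def N.is_group)
  have cosets: "(\<lambda>k. N #>\<^bsub>K\<^esub> k) ` carrier K = carrier (K Mod N)"
    by (auto simp: FactGroup_def RCOSETS_def)
  have "\<psi> ` carrier (K Mod N) = carrier G"
    using \<psi> by (simp add: iso_def bij_betw_def)
  then have surj: "\<theta> ` carrier K = carrier G"
    using cosets unfolding \<theta>_def by (metis image_image)
  have "\<theta> k = \<one>\<^bsub>G\<^esub> \<longleftrightarrow> k \<in> N" if k: "k \<in> carrier K" for k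
  proof -
    have inj: "inj_on \<psi> (carrier (K Mod N))"
      using \<psi> by (simp add: iso_def bij_betw_def)
    have "N #>\<^bsub>K\<^esub> k \<in> carrier (K Mod N)"
      using cosets k by blast
    then have "\<theta> k = \<one>\<^bsub>G\<^esub> \<longleftrightarrow> N #>\<^bsub>K\<^esub> k = N"
      unfolding \<theta>_def using inj_onD[OF inj _ _ Q.one_closed] group_hom.hom_one[OF \<psi>_hom] by auto
    also have "\<dots> \<longleftrightarrow> k \<in> N"
      using N.rcos_const[OF N.is_group] N.rcos_self[OF k N.subgroup_axioms] by metis
    finally show ?thesis .
  qed
  then have "kernel K G \<theta> = N"
    unfolding kernel_def using N.subset by blast
  with hom surj that show ?thesis
    by blast
qed

lemma (in group_hom) commute_if_commutator_in_kernel: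
  assumes x: "x \<in> carrier G" and y: "y \<in> carrier G" and "commutator G x y \<in> kernel G H h"
  shows "h x \<otimes>\<^bsub>H\<^esub> h y = h y \<otimes>\<^bsub>H\<^esub> h x"
proof -
  have hxy: "h x \<in> carrier H" "h y \<in> carrier H"
    using x y by simp_all
  have "h x \<otimes>\<^bsub>H\<^esub> h y \<otimes>\<^bsub>H\<^esub> inv\<^bsub>H\<^esub> h x \<otimes>\<^bsub>H\<^esub> inv\<^bsub>H\<^esub> h y = \<one>\<^bsub>H\<^esub>"
    using assms unfolding kernel_def commutator_def by simp
  then have "(h x \<otimes>\<^bsub>H\<^esub> h y) \<otimes>\<^bsub>H\<^esub> inv\<^bsub>H\<^esub> (h y \<otimes>\<^bsub>H\<^esub> h x) = \<one>\<^bsub>H\<^esub>"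
    using hxy by (simp add: H.inv_mult_group H.m_assoc)
  then have "inv\<^bsub>H\<^esub> (inv\<^bsub>H\<^esub> (h y \<otimes>\<^bsub>H\<^esub> h x)) = h x \<otimes>\<^bsub>H\<^esub> h y"
    using hxy by (intro H.inv_equality) auto
  with hxy show ?thesis
    by simp
qed

lemma (in group_hom) fin_gen_lift:
  assumes "A \<subseteq> h ` L" "L \<subseteq> carrier G" "fin_gen H A"
  obtains A' where "finite A'" "A' \<subseteq> L" "h ` generate G A' = A"
proof -
  obtain S where S: "finite S" "S \<subseteq> carrier H" "A = generate H S"
    using assms(3) unfolding fin_gen_def by blast
  have "S \<subseteq> h ` L"
    using S(3) generate.incl[of _ S H] assms(1) by blast
  then obtain A' where "A' \<subseteq> L" "finite A'" "S = h ` A'"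
    using finite_subset_image[OF S(1)] by blast
  moreover have "h ` generate G A' = generate H S"
    using generate_img[of A'] calculation assms(2) by auto
  ultimately show ?thesis
    using S(3) that by blast
qed

lemma (in group_hom) carrier_not_subset_kernel:
  assumes surj: "h ` carrier G = carrier H" and nontrivial: "carrier H \<noteq> {\<one>\<^bsub>H\<^esub>}"
  shows "\<not> carrier G \<subseteq> kernel G H h"
proof
  assume "carrier G \<subseteq> kernel G H h"
  then have "carrier H \<subseteq> {\<one>\<^bsub>H\<^esub>}"
    unfolding surj[symmetric] kernel_def by blast
  with nontrivial H.one_closed show False
    by blast
qed

lemma (in group_hom) image_conj_commuting_mod_kernel:
  assumes surj: "h ` carrier G = carrier H" and L: "L \<lhd> G" "\<not> L \<subseteq> kernel G H h"
    and comm: "conj_commuting_mod G (kernel G H h) L"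
  shows "\<exists>M. M \<lhd> H \<and> M \<noteq> {\<one>\<^bsub>H\<^esub>} \<and>
           (\<forall>A B. A \<subseteq> M \<and> B \<subseteq> M \<and> subgroup A H \<and> subgroup B H \<and>
                  fin_gen H A \<and> fin_gen H B \<longrightarrow>
              (\<exists>g\<in>carrier H. \<forall>a\<in>A. \<forall>b\<in>B.
                 (g \<otimes>\<^bsub>H\<^esub> a \<otimes>\<^bsub>H\<^esub> inv\<^bsub>H\<^esub> g) \<otimes>\<^bsub>H\<^esub> b = b \<otimes>\<^bsub>H\<^esub> (g \<otimes>\<^bsub>H\<^esub> a \<otimes>\<^bsub>H\<^esub> inv\<^bsub>H\<^esub> g)))"
proof (intro exI conjI allI impI)
  have L_carrier: "L \<subseteq> carrier G"
    using L(1) normal_imp_subgroup subgroup.subset by blast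
  have "group_hom G H h"
    by unfold_locales
  then show "h ` L \<lhd> H"
    using normal.surj_hom_normal_subgroup[OF L(1) _ surj] by blast
  obtain l where "l \<in> L" "l \<notin> kernel G H h"
    using L(2) by blast
  with L_carrier show "h ` L \<noteq> {\<one>\<^bsub>H\<^esub>}"
    unfolding kernel_def by blast
  fix A B
  assume AB: "A \<subseteq> h ` L \<and> B \<subseteq> h ` L \<and> subgroup A H \<and> subgroup B H \<and> fin_gen H A \<and> fin_gen H B"
  obtain A' where A': "finite A'" "A' \<subseteq> L" "h ` generate G A' = A"
    using fin_gen_lift[OF _ L_carrier] AB by blast
  obtain B' where B': "finite B'" "B' \<subseteq> L" "h ` generate G B' = B"
    using fin_gen_lift[OF _ L_carrier] AB by blast
  have "\<exists>g\<in>carrier G. \<forall>a\<in>generate G A'. \<forall>b\<in>generate G B'.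
      commutator G (g \<otimes> a \<otimes> inv g) b \<in> kernel G H h"
    by (rule conj_commuting_mod_def[THEN iffD1, rule_format, OF comm A'(1,2) B'(1,2)])
  then obtain g where g: "g \<in> carrier G" and g_comm: "\<And>a b. a \<in> generate G A' \<Longrightarrow>
      b \<in> generate G B' \<Longrightarrow> commutator G (g \<otimes> a \<otimes> inv g) b \<in> kernel G H h"
    by blast
  have "(h g \<otimes>\<^bsub>H\<^esub> h a \<otimes>\<^bsub>H\<^esub> inv\<^bsub>H\<^esub> h g) \<otimes>\<^bsub>H\<^esub> h b = h b \<otimes>\<^bsub>H\<^esub> (h g \<otimes>\<^bsub>H\<^esub> h a \<otimes>\<^bsub>H\<^esub> inv\<^bsub>H\<^esub> h g)"
    if a: "a \<in> generate G A'" and b: "b \<in> generate G B'" for a b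
  proof -
    have "a \<in> carrier G" "b \<in> carrier G"
      using a b A'(2) B'(2) L_carrier G.generate_in_carrier by blast+
    with g have "h (g \<otimes> a \<otimes> inv g) \<otimes>\<^bsub>H\<^esub> h b = h b \<otimes>\<^bsub>H\<^esub> h (g \<otimes> a \<otimes> inv g)"
      by (intro commute_if_commutator_in_kernel g_comm a b) auto
    with g \<open>a \<in> carrier G\<close> show ?thesis
      by simp
  qed
  with g A'(3) B'(3) show "\<exists>g\<in>carrier H. \<forall>a\<in>A. \<forall>b\<in>B.
      (g \<otimes>\<^bsub>H\<^esub> a \<otimes>\<^bsub>H\<^esub> inv\<^bsub>H\<^esub> g) \<otimes>\<^bsub>H\<^esub> b = b \<otimes>\<^bsub>H\<^esub> (g \<otimes>\<^bsub>H\<^esub> a \<otimes>\<^bsub>H\<^esub> inv\<^bsub>H\<^esub> g)"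
    by (intro bexI[of _ "h g"]) auto
qed

section \<open>Orbitals of a group of PL homeomorphisms\<close>

lemma commute_on_if_supports_separated:
  assumes "inj_on f S" "inj_on h S" "f ` S \<subseteq> S" "h ` S \<subseteq> S"
    and "\<And>t. t \<in> S \<Longrightarrow> t \<notin> U \<Longrightarrow> f t = t" "\<And>t. t \<in> S \<Longrightarrow> t \<in> U \<Longrightarrow> h t = t"
    and "t \<in> S"
  shows "f (h t) = h (f t)"
proof (cases "t \<in> U")
  case True
  have "f t \<in> U"
  proof (rule ccontr)
    assume "f t \<notin> U"
    then have "f (f t) = f t"
      using assms(3,5,7) by blast
    then have "f t = t"
      using inj_onD[OF assms(1)] assms(3,7) by blast
    with True \<open>f t \<notin> U\<close> show False
      by simp
  qed
  then show ?thesis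
    using True assms(3,6,7) by auto
next
  case False
  have "h t \<notin> U"
  proof
    assume "h t \<in> U"
    then have "h (h t) = h t"
      using assms(4,6,7) by blast
    then have "h t = t"
      using inj_onD[OF assms(2)] assms(4,7) by blast
    with False \<open>h t \<in> U\<close> show False
      by simp
  qed
  then show ?thesis
    using False assms(4,5,7) by auto
qed

definition support :: "(real \<Rightarrow> real) \<Rightarrow> real set" where
  "support k = {t. k t \<noteq> t}"

locale PL_group =
  fixes K :: "(real \<Rightarrow> real) monoid" (structure)
  assumes is_group: "group K"
    and carrier_PLO_homeos: "carrier K \<subseteq> PLO_homeos"
    and mult_eq: "mult K = (\<circ>)"
    and one_eq: "one K = id"
begin

sublocale group K
  by (rule is_group)

lemma mult_apply [simp]: "(f \<otimes> g) t = f (g t)"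
  by (simp add: mult_eq)

lemma one_apply [simp]: "\<one> t = t"
  by (simp add: one_eq)

lemma inv_apply [simp]:
  assumes "f \<in> carrier K"
  shows "f ((inv f) t) = t" "(inv f) (f t) = t"
  using r_inv[OF assms] l_inv[OF assms] by (metis mult_apply one_apply)+

lemma less_apply_iff:
  assumes "g \<in> carrier K"
  shows "g x < g y \<longleftrightarrow> x < y"
  using strict_mono_PLO_homeos assms carrier_PLO_homeos by (metis subsetD strict_mono_less)

lemma apply_eq_iff:
  assumes "g \<in> carrier K"
  shows "g x = g y \<longleftrightarrow> x = y"
  using strict_mono_PLO_homeos assms carrier_PLO_homeos by (metis subsetD strict_mono_eq)

lemma isCont_apply:
  assumes "g \<in> carrier K"
  shows "isCont g x"
  using isCont_PLO_homeos assms carrier_PLO_homeos by blast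

definition fixed_points :: "real set" where
  "fixed_points = {p. \<forall>g\<in>carrier K. g p = p}"

definition orbital :: "real \<Rightarrow> real set" where
  "orbital y = {t. \<exists>g\<in>carrier K. \<exists>h\<in>carrier K. g y < t \<and> t < h y}"

lemma orbital_closed:
  assumes g: "g \<in> carrier K" and t: "t \<in> orbital y"
  shows "g t \<in> orbital y"
proof -
  obtain g' h' where "g' \<in> carrier K" "h' \<in> carrier K" "g' y < t" "t < h' y"
    using t unfolding orbital_def by blast
  then have "(g \<otimes> g') y < g t" "g t < (g \<otimes> h') y" "g \<otimes> g' \<in> carrier K" "g \<otimes> h' \<in> carrier K"
    using g less_apply_iff[OF g] by auto
  then show ?thesis
    unfolding orbital_def by blast
qed

lemma image_orbital:
  assumes g: "g \<in> carrier K"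
  shows "g ` orbital y = orbital y"
proof
  show "g ` orbital y \<subseteq> orbital y"
    using orbital_closed[OF g] by blast
  show "orbital y \<subseteq> g ` orbital y"
  proof
    fix t assume "t \<in> orbital y"
    then have "(inv g) t \<in> orbital y"
      using g by (simp add: orbital_closed)
    then show "t \<in> g ` orbital y"
      using g by (metis image_eqI inv_apply(1))
  qed
qed

lemma mem_orbital_self:
  assumes "y \<notin> fixed_points"
  shows "y \<in> orbital y"
proof -
  obtain g where g: "g \<in> carrier K" "g y \<noteq> y"
    using assms unfolding fixed_points_def by blast
  have "(inv g) y < y \<longleftrightarrow> y < g y" "y < (inv g) y \<longleftrightarrow> g y < y"
    using less_apply_iff[OF g(1), of "(inv g) y" y] less_apply_iff[OF g(1), of y "(inv g) y"] g(1)
    by simp_all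
  with g inv_closed[OF g(1)] show ?thesis
    unfolding orbital_def by (cases "g y < y") (auto simp: neq_iff)
qed

lemma open_orbital: "open (orbital y)"
proof -
  have "orbital y = (\<Union>g\<in>carrier K. \<Union>h\<in>carrier K. {g y<..<h y})"
    unfolding orbital_def by auto
  then show ?thesis
    by (simp add: open_UN)
qed

lemma orbital_subset_unit: "orbital y \<subseteq> {0..1}"
proof
  fix t assume "t \<in> orbital y"
  then obtain g h where g: "g \<in> PLO_homeos" and h: "h \<in> PLO_homeos" and t: "g y < t" "t < h y"
    unfolding orbital_def using carrier_PLO_homeos by blast
  show "t \<in> {0..1}"
  proof (cases "y \<in> {0..1}")
    case True
    then have "g y \<in> {0..1}" "h y \<in> {0..1}"
      using PLO_homeos_image_unit[OF g] PLO_homeos_image_unit[OF h] by blast+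
    with t show ?thesis
      by auto
  next
    case False
    then have "g y = y" "h y = y"
      using PLO_homeos_fix_outside[OF g] PLO_homeos_fix_outside[OF h] by auto
    with t show ?thesis
      by auto
  qed
qed

lemma bdd_above_orbital: "bdd_above (orbital y)"
  by (rule bdd_above_mono[OF bdd_above_Icc orbital_subset_unit])

lemma bdd_below_orbital: "bdd_below (orbital y)"
  by (rule bdd_below_mono[OF bdd_below_Icc orbital_subset_unit])

lemma orbital_shift_below:
  assumes "c \<in> orbital y" "d \<in> orbital y"
  obtains g where "g \<in> carrier K" "g d < c"
proof -
  obtain g h where g: "g \<in> carrier K" "g y < c" and h: "h \<in> carrier K" "d < h y"
    using assms unfolding orbital_def by blast
  have "(g \<otimes> inv h) d < g y"
    using less_apply_iff[OF g(1)] less_apply_iff[OF inv_closed[OF h(1)], of d "h y"] h by simp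
  with g h show ?thesis
    by (intro that[of "g \<otimes> inv h"]) auto
qed

lemma eventually_nhds_fixed_point_apply:
  assumes g: "g \<in> carrier K" and p: "p \<in> fixed_points" and P: "\<forall>\<^sub>F t in nhds p. P t"
  shows "\<forall>\<^sub>F t in nhds p. P (g t)"
proof -
  have "(g \<longlongrightarrow> g p) (nhds p)"
    using isCont_apply[OF g] by (simp add: isCont_def tendsto_at_iff_tendsto_nhds)
  moreover have "g p = p"
    using g p unfolding fixed_points_def by blast
  ultimately have "filterlim g (nhds p) (nhds p)"
    by simp
  then show ?thesis
    using P unfolding filterlim_iff by blast
qed

definition germ_trivial :: "(real \<Rightarrow> real) set" where
  "germ_trivial = {k \<in> carrier K. \<forall>p\<in>fixed_points. \<forall>\<^sub>F t in nhds p. k t = t}"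

lemma germ_trivialD:
  "k \<in> germ_trivial \<Longrightarrow> p \<in> fixed_points \<Longrightarrow> \<forall>\<^sub>F t in nhds p. k t = t"
  unfolding germ_trivial_def by blast

definition supported_in :: "real set \<Rightarrow> (real \<Rightarrow> real) set" where
  "supported_in U = {k \<in> carrier K. support k \<subseteq> U}"

lemma normal_germ_trivial: "germ_trivial \<lhd> K"
proof (rule normal_invI)
  show "subgroup germ_trivial K"
  proof (rule subgroupI)
    show "germ_trivial \<subseteq> carrier K" "germ_trivial \<noteq> {}"
      unfolding germ_trivial_def by auto
  next
    fix a b assume a: "a \<in> germ_trivial" and b: "b \<in> germ_trivial"
    then have ab: "a \<in> carrier K" "b \<in> carrier K"
      unfolding germ_trivial_def by auto
    have "\<forall>\<^sub>F t in nhds p. (inv a) t = t" if "p \<in> fixed_points" for p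
      using germ_trivialD[OF a that] by eventually_elim (metis ab(1) inv_apply(2))
    with ab show "inv a \<in> germ_trivial"
      unfolding germ_trivial_def by simp
    have "\<forall>\<^sub>F t in nhds p. (a \<otimes> b) t = t" if "p \<in> fixed_points" for p
      using germ_trivialD[OF a that] germ_trivialD[OF b that] by eventually_elim simp
    with ab show "a \<otimes> b \<in> germ_trivial"
      unfolding germ_trivial_def by simp
  qed
next
  fix x k assume x: "x \<in> carrier K" and k: "k \<in> germ_trivial"
  have "\<forall>\<^sub>F t in nhds p. (x \<otimes> k \<otimes> inv x) t = t" if p: "p \<in> fixed_points" for p
    using eventually_nhds_fixed_point_apply[OF inv_closed[OF x] p germ_trivialD[OF k p]]
    by eventually_elim (simp add: x)
  with x k show "x \<otimes> k \<otimes> inv x \<in> germ_trivial"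
    unfolding germ_trivial_def by simp
qed

lemma normal_supported_in:
  assumes invariant: "\<And>g t. g \<in> carrier K \<Longrightarrow> t \<in> U \<Longrightarrow> g t \<in> U"
  shows "supported_in U \<lhd> K"
proof (rule normal_invI)
  show "subgroup (supported_in U) K"
  proof (rule subgroupI)
    show "supported_in U \<subseteq> carrier K"
      unfolding supported_in_def by blast
    have "\<one> \<in> supported_in U"
      unfolding supported_in_def support_def by simp
    then show "supported_in U \<noteq> {}"
      by blast
  next
    fix a b assume a: "a \<in> supported_in U" and b: "b \<in> supported_in U"
    then have ab: "a \<in> carrier K" "b \<in> carrier K" "support a \<subseteq> U" "support b \<subseteq> U"
      unfolding supported_in_def by auto
    have "(inv a) t = t" if "a t = t" for t
      by (metis ab(1) inv_apply(2) that)
    then have "support (inv a) \<subseteq> support a"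
      unfolding support_def by blast
    with ab show "inv a \<in> supported_in U"
      unfolding supported_in_def by simp
    have "support (a \<otimes> b) \<subseteq> support a \<union> support b"
      unfolding support_def by auto
    with ab(3,4) have "support (a \<otimes> b) \<subseteq> U"
      by blast
    with ab show "a \<otimes> b \<in> supported_in U"
      unfolding supported_in_def by simp
  qed
next
  fix x k assume x: "x \<in> carrier K" and k: "k \<in> supported_in U"
  have "t \<in> U" if "t \<in> support (x \<otimes> k \<otimes> inv x)" for t
  proof -
    have "(inv x) t \<in> support k"
      using that x unfolding support_def by auto
    then have "x ((inv x) t) \<in> U"
      using k invariant[OF x] unfolding supported_in_def by blast
    with x show ?thesis
      by simp
  qed
  with x k show "x \<otimes> k \<otimes> inv x \<in> supported_in U"
    unfolding supported_in_def by auto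
qed

definition orbital_subgroup :: "real set \<Rightarrow> (real \<Rightarrow> real) set" where
  "orbital_subgroup Xs = germ_trivial \<inter> supported_in (\<Union>x\<in>Xs. orbital x)"

lemma normal_orbital_subgroup: "orbital_subgroup Xs \<lhd> K"
proof -
  have "g t \<in> (\<Union>x\<in>Xs. orbital x)" if "g \<in> carrier K" "t \<in> (\<Union>x\<in>Xs. orbital x)" for g t
    using that orbital_closed by blast
  then show ?thesis
    unfolding orbital_subgroup_def
    by (intro normal_subgroup_intersect normal_germ_trivial normal_supported_in)
qed

lemma commutator_germ_trivial:
  assumes f: "f \<in> carrier K" and h: "h \<in> carrier K"
  shows "commutator K f h \<in> germ_trivial"
proof -
  have "\<forall>\<^sub>F t in nhds p. commutator K f h t = t" if p: "p \<in> fixed_points" for p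
  proof -
    have "f p = p" "h p = p"
      using f h p unfolding fixed_points_def by auto
    then have "\<forall>\<^sub>F t in nhds p. f (h t) = h (f t)"
      using PLO_homeos_commute_near_common_fixed_point f h carrier_PLO_homeos by blast
    then have "\<forall>\<^sub>F t in nhds p. f (h ((inv f \<otimes> inv h) t)) = h (f ((inv f \<otimes> inv h) t))"
      using eventually_nhds_fixed_point_apply[OF _ p, of "inv f \<otimes> inv h" "\<lambda>s. f (h s) = h (f s)"] f h
      by simp
    then show ?thesis
      unfolding commutator_def by eventually_elim (simp add: f h)
  qed
  with f h show ?thesis
    unfolding germ_trivial_def commutator_def by simp
qed

lemma finite_orbitals_cover_support:
  assumes k: "k \<in> germ_trivial"
  obtains Xs where "finite Xs" "support k \<subseteq> (\<Union>x\<in>Xs. orbital x)"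
proof -
  have kP: "k \<in> PLO_homeos"
    using k carrier_PLO_homeos unfolding germ_trivial_def by auto
  have "k t = t" if "t \<notin> {0..1}" for t
    using PLO_homeos_fix_outside[OF kP, of t] that by auto
  then have "support k \<subseteq> {0..1}"
    unfolding support_def by blast
  then have "bounded (support k)"
    by (rule bounded_subset[OF bounded_closed_interval])
  then have compact: "compact (closure (support k))"
    by (simp add: compact_closure)
  have "t \<notin> fixed_points" if t: "t \<in> closure (support k)" for t
  proof
    assume "t \<in> fixed_points"
    then obtain S where S: "open S" "t \<in> S" "\<forall>s\<in>S. k s = s"
      using germ_trivialD[OF k \<open>t \<in> fixed_points\<close>] unfolding eventually_nhds by blast
    have "S \<inter> support k = {}"
      using S(3) unfolding support_def by blast
    then have "S \<inter> closure (support k) = {}"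
      using open_Int_closure_eq_empty[OF S(1)] by blast
    with S(2) t show False
      by blast
  qed
  then have "closure (support k) \<subseteq> (\<Union>t\<in>closure (support k). orbital t)"
    using mem_orbital_self by blast
  then obtain Xs where "Xs \<subseteq> closure (support k)" "finite Xs"
      "closure (support k) \<subseteq> (\<Union>x\<in>Xs. orbital x)"
    by (rule compactE_image[OF compact open_orbital])
  with closure_subset[of "support k"] that show ?thesis
    by blast
qed

lemma Sup_orbital_fixed:
  assumes "orbital y \<noteq> {}"
  shows "Sup (orbital y) \<in> fixed_points"
  unfolding fixed_points_def
proof (intro CollectI ballI)
  fix g assume g: "g \<in> carrier K"
  have "mono g"
    using g carrier_PLO_homeos strict_mono_PLO_homeos strict_mono_mono by blast
  moreover have "continuous (at_left (Sup (orbital y))) g"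
    using isCont_apply[OF g] continuous_at_imp_continuous_at_within by blast
  ultimately have "g (Sup (orbital y)) = Sup (g ` orbital y)"
    using assms bdd_above_orbital by (rule continuous_at_Sup_mono)
  then show "g (Sup (orbital y)) = Sup (orbital y)"
    by (simp add: image_orbital[OF g])
qed

lemma Inf_orbital_fixed:
  assumes "orbital y \<noteq> {}"
  shows "Inf (orbital y) \<in> fixed_points"
  unfolding fixed_points_def
proof (intro CollectI ballI)
  fix g assume g: "g \<in> carrier K"
  have "mono g"
    using g carrier_PLO_homeos strict_mono_PLO_homeos strict_mono_mono by blast
  moreover have "continuous (at_right (Inf (orbital y))) g"
    using isCont_apply[OF g] continuous_at_imp_continuous_at_within by blast
  ultimately have "g (Inf (orbital y)) = Inf (g ` orbital y)"
    using assms bdd_below_orbital by (rule continuous_at_Inf_mono)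
  then show "g (Inf (orbital y)) = Inf (orbital y)"
    by (simp add: image_orbital[OF g])
qed

lemma germ_trivial_fixes_top_of_orbital:
  assumes k: "k \<in> germ_trivial" and ne: "orbital y \<noteq> {}"
  shows "\<exists>d\<in>orbital y. \<forall>t\<in>orbital y. d < t \<longrightarrow> k t = t"
proof -
  define \<beta> where "\<beta> = Sup (orbital y)"
  obtain e where e: "e > 0" "\<And>t. dist t \<beta> < e \<Longrightarrow> k t = t"
    using germ_trivialD[OF k Sup_orbital_fixed[OF ne]] unfolding \<beta>_def eventually_nhds_metric by blast
  have bdd: "bdd_above (orbital y)"
    by (rule bdd_above_orbital)
  obtain d where d: "d \<in> orbital y" "\<beta> - e < d"
    using less_cSup_iff[OF ne bdd, of "\<beta> - e"] e(1) unfolding \<beta>_def by auto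
  have "k t = t" if "t \<in> orbital y" "d < t" for t
  proof (rule e(2))
    have "t \<le> \<beta>"
      using cSup_upper[OF that(1) bdd] unfolding \<beta>_def .
    with d(2) that(2) show "dist t \<beta> < e"
      by (simp add: dist_real_def)
  qed
  with d(1) show ?thesis
    by blast
qed

lemma germ_trivial_fixes_bottom_of_orbital:
  assumes k: "k \<in> germ_trivial" and ne: "orbital y \<noteq> {}"
  shows "\<exists>c\<in>orbital y. \<forall>t\<in>orbital y. t < c \<longrightarrow> k t = t"
proof -
  define \<alpha> where "\<alpha> = Inf (orbital y)"
  obtain e where e: "e > 0" "\<And>t. dist t \<alpha> < e \<Longrightarrow> k t = t"
    using germ_trivialD[OF k Inf_orbital_fixed[OF ne]] unfolding \<alpha>_def eventually_nhds_metric by blast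
  have bdd: "bdd_below (orbital y)"
    by (rule bdd_below_orbital)
  obtain c where c: "c \<in> orbital y" "c < \<alpha> + e"
    using cInf_less_iff[OF ne bdd, of "\<alpha> + e"] e(1) unfolding \<alpha>_def by auto
  have "k t = t" if "t \<in> orbital y" "t < c" for t
  proof (rule e(2))
    have "\<alpha> \<le> t"
      using cInf_lower[OF that(1) bdd] unfolding \<alpha>_def .
    with c(2) that(2) show "dist t \<alpha> < e"
      by (simp add: dist_real_def)
  qed
  with c(1) show ?thesis
    by blast
qed

lemma subgroup_pointwise_stabilizer: "subgroup {k \<in> carrier K. \<forall>t\<in>U. k t = t} K"
proof (rule subgroupI)
  fix a b assume a: "a \<in> {k \<in> carrier K. \<forall>t\<in>U. k t = t}" and b: "b \<in> {k \<in> carrier K. \<forall>t\<in>U. k t = t}"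
  have "(inv a) t = t" if "t \<in> U" for t
    using a that by (metis (mono_tags, lifting) inv_apply(2) mem_Collect_eq)
  with a show "inv a \<in> {k \<in> carrier K. \<forall>t\<in>U. k t = t}"
    by simp
  show "a \<otimes> b \<in> {k \<in> carrier K. \<forall>t\<in>U. k t = t}"
    using a b by simp
qed auto

lemma generate_fixes_pointwise:
  assumes "A \<subseteq> carrier K" "\<And>\<gamma> t. \<gamma> \<in> A \<Longrightarrow> t \<in> U \<Longrightarrow> \<gamma> t = t"
    and "a \<in> generate K A" "t \<in> U"
  shows "a t = t"
proof -
  have "generate K A \<subseteq> {k \<in> carrier K. \<forall>t\<in>U. k t = t}"
    using assms(1,2) by (intro generate_subgroup_incl subgroup_pointwise_stabilizer) auto
  with assms(3,4) show ?thesis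
    by blast
qed

lemma generate_fixes_top_of_orbital:
  assumes A: "finite A" "A \<subseteq> germ_trivial" and ne: "orbital y \<noteq> {}"
  obtains d where "d \<in> orbital y"
    "\<And>a t. a \<in> generate K A \<Longrightarrow> t \<in> orbital y \<Longrightarrow> d < t \<Longrightarrow> a t = t"
proof -
  have "\<forall>\<gamma>\<in>A. \<exists>d\<in>orbital y. \<forall>t\<in>orbital y. d < t \<longrightarrow> \<gamma> t = t"
    using germ_trivial_fixes_top_of_orbital A(2) ne by blast
  then obtain D where D: "\<And>\<gamma>. \<gamma> \<in> A \<Longrightarrow> D \<gamma> \<in> orbital y"
    "\<And>\<gamma> t. \<gamma> \<in> A \<Longrightarrow> t \<in> orbital y \<Longrightarrow> D \<gamma> < t \<Longrightarrow> \<gamma> t = t"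
    by metis
  obtain o0 where o0: "o0 \<in> orbital y"
    using ne by blast
  define d where "d = Max (insert o0 (D ` A))"
  have "d \<in> orbital y"
    unfolding d_def using Max_in[of "insert o0 (D ` A)"] A(1) o0 D(1) by auto
  moreover have "a t = t" if "a \<in> generate K A" "t \<in> orbital y" "d < t" for a t
  proof (rule generate_fixes_pointwise[where U = "orbital y \<inter> {d<..}"])
    show "A \<subseteq> carrier K"
      using A(2) unfolding germ_trivial_def by auto
    have "D \<gamma> \<le> d" if "\<gamma> \<in> A" for \<gamma>
      unfolding d_def using A(1) that by (intro Max_ge) auto
    then show "\<gamma> s = s" if "\<gamma> \<in> A" "s \<in> orbital y \<inter> {d<..}" for \<gamma> s
      using D(2) that by fastforce
  qed (use that in auto)
  ultimately show ?thesis
    using that by blast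
qed

lemma generate_fixes_bottom_of_orbital:
  assumes A: "finite A" "A \<subseteq> germ_trivial" and ne: "orbital y \<noteq> {}"
  obtains c where "c \<in> orbital y"
    "\<And>a t. a \<in> generate K A \<Longrightarrow> t \<in> orbital y \<Longrightarrow> t < c \<Longrightarrow> a t = t"
proof -
  have "\<forall>\<gamma>\<in>A. \<exists>c\<in>orbital y. \<forall>t\<in>orbital y. t < c \<longrightarrow> \<gamma> t = t"
    using germ_trivial_fixes_bottom_of_orbital A(2) ne by blast
  then obtain C where C: "\<And>\<gamma>. \<gamma> \<in> A \<Longrightarrow> C \<gamma> \<in> orbital y"
    "\<And>\<gamma> t. \<gamma> \<in> A \<Longrightarrow> t \<in> orbital y \<Longrightarrow> t < C \<gamma> \<Longrightarrow> \<gamma> t = t"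
    by metis
  obtain o0 where o0: "o0 \<in> orbital y"
    using ne by blast
  define c where "c = Min (insert o0 (C ` A))"
  have "c \<in> orbital y"
    unfolding c_def using Min_in[of "insert o0 (C ` A)"] A(1) o0 C(1) by auto
  moreover have "a t = t" if "a \<in> generate K A" "t \<in> orbital y" "t < c" for a t
  proof (rule generate_fixes_pointwise[where U = "orbital y \<inter> {..<c}"])
    show "A \<subseteq> carrier K"
      using A(2) unfolding germ_trivial_def by auto
    have "c \<le> C \<gamma>" if "\<gamma> \<in> A" for \<gamma>
      unfolding c_def using A(1) that by (intro Min_le) auto
    then show "\<gamma> s = s" if "\<gamma> \<in> A" "s \<in> orbital y \<inter> {..<c}" for \<gamma> s
      using C(2) that by fastforce
  qed (use that in auto)
  ultimately show ?thesis
    using that by blast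
qed

lemma conj_commute_on_orbital:
  assumes A: "finite A" "A \<subseteq> germ_trivial" and B: "finite B" "B \<subseteq> germ_trivial"
  obtains g where "g \<in> carrier K"
    "\<And>a b t. a \<in> generate K A \<Longrightarrow> b \<in> generate K B \<Longrightarrow> t \<in> orbital y \<Longrightarrow>
       (g \<otimes> a \<otimes> inv g) (b t) = b ((g \<otimes> a \<otimes> inv g) t)"
proof (cases "orbital y = {}")
  case True
  then show ?thesis
    using that one_closed by blast
next
  case False
  obtain d where d: "d \<in> orbital y"
    and fix_a: "\<And>a t. a \<in> generate K A \<Longrightarrow> t \<in> orbital y \<Longrightarrow> d < t \<Longrightarrow> a t = t"
    using generate_fixes_top_of_orbital[OF A False] by blast
  obtain c where c: "c \<in> orbital y"
    and fix_b: "\<And>b t. b \<in> generate K B \<Longrightarrow> t \<in> orbital y \<Longrightarrow> t < c \<Longrightarrow> b t = t"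
    using generate_fixes_bottom_of_orbital[OF B False] by blast
  \<comment> \<open>conjugating by \<open>g\<close> pushes the support of \<open>a\<close> above \<open>c\<close>, where \<open>b\<close> acts trivially\<close>
  obtain g where g: "g \<in> carrier K" "g d < c"
    using orbital_shift_below[OF c d] by blast
  have carrier: "generate K A \<subseteq> carrier K" "generate K B \<subseteq> carrier K"
    using A(2) B(2) generate_in_carrier unfolding germ_trivial_def by blast+
  have "(g \<otimes> a \<otimes> inv g) (b t) = b ((g \<otimes> a \<otimes> inv g) t)"
    if a: "a \<in> generate K A" and b: "b \<in> generate K B" and t: "t \<in> orbital y" for a b t
  proof (rule commute_on_if_supports_separated[where S = "orbital y" and U = "{..<c}"])
    have a': "g \<otimes> a \<otimes> inv g \<in> carrier K" and b': "b \<in> carrier K"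
      using a b g(1) carrier by auto
    show "inj_on (g \<otimes> a \<otimes> inv g) (orbital y)" "inj_on b (orbital y)"
      using apply_eq_iff[OF a'] apply_eq_iff[OF b'] by (auto intro: inj_onI)
    show "(g \<otimes> a \<otimes> inv g) ` orbital y \<subseteq> orbital y" "b ` orbital y \<subseteq> orbital y"
      using orbital_closed[OF a'] orbital_closed[OF b'] by auto
    show "(g \<otimes> a \<otimes> inv g) s = s" if "s \<in> orbital y" "s \<notin> {..<c}" for s
    proof -
      have "(inv g) s \<in> orbital y"
        using orbital_closed[OF inv_closed[OF g(1)] that(1)] .
      moreover have "d < (inv g) s"
        using less_apply_iff[OF g(1), of d "(inv g) s"] g that(2) by simp
      ultimately show ?thesis
        using fix_a[OF a] g(1) by simp
    qed
    show "b s = s" if "s \<in> orbital y" "s \<in> {..<c}" for s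
      using fix_b[OF b] that by simp
  qed (rule t)
  with g(1) that show ?thesis
    by blast
qed

lemma commutator_fixes_where_commuting:
  assumes a: "a \<in> carrier K" and b: "b \<in> carrier K"
    and commute: "\<And>s. s \<in> orbital y \<Longrightarrow> a (b s) = b (a s)" and t: "t \<in> orbital y"
  shows "commutator K a b t = t"
proof -
  define s where "s = (inv a) ((inv b) t)"
  have "s \<in> orbital y"
    unfolding s_def using t a b by (simp add: orbital_closed)
  then have "a (b s) = b (a s)"
    by (rule commute)
  then show ?thesis
    unfolding commutator_def s_def using a b by simp
qed

lemma orbital_subgroup_Diff:
  assumes k: "k \<in> orbital_subgroup Xs" and trivial: "\<And>t. t \<in> orbital x0 \<Longrightarrow> k t = t"
  shows "k \<in> orbital_subgroup (Xs - {x0})"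
proof -
  have "support k \<subseteq> (\<Union>x\<in>Xs - {x0}. orbital x)"
    using k trivial unfolding orbital_subgroup_def supported_in_def support_def by blast
  with k show ?thesis
    unfolding orbital_subgroup_def supported_in_def by blast
qed

lemma conj_commuting_mod_orbital_subgroup:
  assumes "x0 \<in> Xs"
  shows "conj_commuting_mod K (orbital_subgroup (Xs - {x0})) (orbital_subgroup Xs)"
  unfolding conj_commuting_mod_def
proof (intro allI impI)
  fix A B assume A: "finite A" "A \<subseteq> orbital_subgroup Xs" and B: "finite B" "B \<subseteq> orbital_subgroup Xs"
  have sub: "subgroup (orbital_subgroup Xs) K"
    using normal_orbital_subgroup normal_imp_subgroup by blast
  have "orbital_subgroup Xs \<subseteq> germ_trivial"
    unfolding orbital_subgroup_def by blast
  then obtain g where g: "g \<in> carrier K" and commute: "\<And>a b t. a \<in> generate K A \<Longrightarrow>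
      b \<in> generate K B \<Longrightarrow> t \<in> orbital x0 \<Longrightarrow> (g \<otimes> a \<otimes> inv g) (b t) = b ((g \<otimes> a \<otimes> inv g) t)"
    using conj_commute_on_orbital[OF A(1) _ B(1), of x0] A(2) B(2) by blast
  have "commutator K (g \<otimes> a \<otimes> inv g) b \<in> orbital_subgroup (Xs - {x0})"
    if a: "a \<in> generate K A" and b: "b \<in> generate K B" for a b
  proof (rule orbital_subgroup_Diff)
    have "a \<in> orbital_subgroup Xs" and b': "b \<in> orbital_subgroup Xs"
      using generate_subgroup_incl[OF _ sub] A(2) B(2) a b by blast+
    then have a': "g \<otimes> a \<otimes> inv g \<in> orbital_subgroup Xs"
      using normal_invE(2)[OF normal_orbital_subgroup g] by auto
    with b' show "commutator K (g \<otimes> a \<otimes> inv g) b \<in> orbital_subgroup Xs"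
      unfolding commutator_def using sub by (simp add: subgroup.m_closed subgroup.m_inv_closed)
    show "commutator K (g \<otimes> a \<otimes> inv g) b t = t" if "t \<in> orbital x0" for t
    proof (rule commutator_fixes_where_commuting[where y = x0])
      show "g \<otimes> a \<otimes> inv g \<in> carrier K" "b \<in> carrier K"
        using a' b' subgroup.subset[OF sub] by auto
    qed (use commute[OF a b] that in auto)
  qed
  with g show "\<exists>g\<in>carrier K. \<forall>a\<in>generate K A. \<forall>b\<in>generate K B.
      commutator K (g \<otimes> a \<otimes> inv g) b \<in> orbital_subgroup (Xs - {x0})"
    by blast
qed

lemma orbital_subgroup_empty: "orbital_subgroup {} = {\<one>}"
proof -
  have "k = \<one>" if "k \<in> orbital_subgroup {}" for k
    using that unfolding orbital_subgroup_def supported_in_def support_def by (auto simp: one_eq)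
  moreover have "\<one> \<in> orbital_subgroup {}"
    using subgroup.one_closed[OF normal_imp_subgroup[OF normal_orbital_subgroup]] .
  ultimately show ?thesis
    by blast
qed

lemma exists_conj_commuting_normal_subgroup:
  assumes N: "subgroup N K" and nontrivial: "\<not> carrier K \<subseteq> N"
  obtains L where "L \<lhd> K" "\<not> L \<subseteq> N" "conj_commuting_mod K N L"
proof (cases "derived_set K (carrier K) \<subseteq> N")
  case True
  then show ?thesis
    using that normal_self nontrivial conj_commuting_mod_carrier by blast
next
  case False
  then obtain f h where "f \<in> carrier K" "h \<in> carrier K" "commutator K f h \<notin> N"
    unfolding commutator_def by blast
  moreover obtain X0 where "finite X0" "support (commutator K f h) \<subseteq> (\<Union>x\<in>X0. orbital x)"
    using finite_orbitals_cover_support[OF commutator_germ_trivial] calculation(1,2) by blast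
  ultimately have "finite X0 \<and> \<not> orbital_subgroup X0 \<subseteq> N"
    using commutator_germ_trivial unfolding orbital_subgroup_def supported_in_def germ_trivial_def by blast
  then obtain Xs where Xs: "finite Xs" "\<not> orbital_subgroup Xs \<subseteq> N"
    and minimal: "\<And>Y. finite Y \<Longrightarrow> \<not> orbital_subgroup Y \<subseteq> N \<Longrightarrow> card Xs \<le> card Y"
    using ex_has_least_nat[of "\<lambda>Y. finite Y \<and> \<not> orbital_subgroup Y \<subseteq> N" X0 card] by blast
  have "Xs \<noteq> {}"
    using Xs(2) orbital_subgroup_empty subgroup.one_closed[OF N] by auto
  then obtain x0 where x0: "x0 \<in> Xs"
    by blast
  have "card (Xs - {x0}) < card Xs"
    using card_Diff1_less[OF Xs(1) x0] .
  then have "orbital_subgroup (Xs - {x0}) \<subseteq> N"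
    using minimal[of "Xs - {x0}"] Xs(1) by fastforce
  then have "conj_commuting_mod K N (orbital_subgroup Xs)"
    using conj_commuting_mod_orbital_subgroup[OF x0] conj_commuting_mod_mono by blast
  with normal_orbital_subgroup Xs(2) that show ?thesis
    by blast
qed

end

theorem lemma4p7:
  fixes G (structure)
  assumes "group G" and "in_QPLO G" and "fin_gen G (carrier G)"
    and "carrier G \<noteq> {\<one>}"
  shows "\<exists>H. H \<lhd> G \<and> H \<noteq> {\<one>} \<and>
           (\<forall>A B. A \<subseteq> H \<and> B \<subseteq> H \<and> subgroup A G \<and> subgroup B G \<and>
                  fin_gen G A \<and> fin_gen G B \<longrightarrow>
              (\<exists>g\<in>carrier G. \<forall>a\<in>A. \<forall>b\<in>B.
                 (g \<otimes> a \<otimes> inv g) \<otimes> b = b \<otimes> (g \<otimes> a \<otimes> inv g)))"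
proof -
  obtain K N where K: "subgroup K PLgroup" and N: "N \<lhd> PLgroup\<lparr>carrier := K\<rparr>"
    and iso: "G \<cong> PLgroup\<lparr>carrier := K\<rparr> Mod N"
    using assms(2) unfolding in_QPLO_def by blast
  have "group (PLgroup\<lparr>carrier := K\<rparr>)"
    using N by (simp add: normal_def)
  then interpret PL_group "PLgroup\<lparr>carrier := K\<rparr>"
    using subgroup.subset[OF K] by (intro PL_group.intro) (auto simp: PLgroup_def)
  obtain \<theta> where hom: "group_hom (PLgroup\<lparr>carrier := K\<rparr>) G \<theta>"
    and surj: "\<theta> ` K = carrier G" and kernel: "kernel (PLgroup\<lparr>carrier := K\<rparr>) G \<theta> = N"
    using surj_hom_of_iso_FactGroup[OF assms(1) N] iso unfolding is_iso_def by auto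
  have "\<not> K \<subseteq> N"
    using group_hom.carrier_not_subset_kernel[OF hom] surj kernel assms(4) by simp
  then obtain L where "L \<lhd> PLgroup\<lparr>carrier := K\<rparr>" "\<not> L \<subseteq> N"
    and "conj_commuting_mod (PLgroup\<lparr>carrier := K\<rparr>) N L"
    using exists_conj_commuting_normal_subgroup normal_imp_subgroup[OF N] by auto
  then show ?thesis
    using group_hom.image_conj_commuting_mod_kernel[OF hom] surj kernel by simp
qed

end
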